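(* Let $j=\sqrt{-1}$, $\zeta_8=e^{2\pi j/8}$, and let $\sigma$ be the automorphism of $\mathbb{Q}(\zeta_8)$ fixing $\mathbb{Q}(j)$ with $\sigma(\zeta_8)=-\zeta_8$. For $a\in\mathbb{Z}[\zeta_8]$ and $b\in\mathbb{Z}[j]$ define the $3\times 2$ matrix $$X=\begin{pmatrix} X_S\\ X_T\end{pmatrix}=\begin{pmatrix} a & b\\ \sigma(a) & -b^*\\ b & \sigma(a)^*\end{pmatrix},$$ where $X_S=(a\ \ b)$ is the first row and $X_T=\begin{pmatrix} \sigma(a) & -b^*\\ b & \sigma(a)^*\end{pmatrix}$ consists of the last two rows. Then for every $(a,b)\neq(0,0)$: (i) $\det(X^\dagger X)\geq 1$ (so the code $\{X\}$ has the non-vanishing determinant property), and (ii) $\det(X_S X_S^\dagger)\,\det(X_T X_T^\dagger)\neq 0$ (full diversity in the parallel channel).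
   Context: $c^*$ denotes the complex conjugate of $c\in\mathbb{C}$ (elements of $\mathbb{Q}(\zeta_8)$ are viewed as complex numbers), and $M^\dagger$ denotes the conjugate transpose of a complex matrix $M$. $\mathbb{Z}[\zeta_8]$ is the ring of integers of $\mathbb{Q}(\zeta_8)$ and $\mathbb{Z}[j]$ the ring of Gaussian integers. $\mathbb{Q}(\zeta_8)/\mathbb{Q}(j)$ is a cyclic extension of degree 2 with Galois group generated by $\sigma$, and $a\sigma(a)$ is the relative norm of $a$, which lies in $\mathbb{Z}[j]$ for $a\in\mathbb{Z}[\zeta_8]$. *)

theory Defs
  imports Complex_Main "Jordan_Normal_Form.Schur_Decomposition"
begin

text \<open>Elements of Z[zeta8] are written
  a = a0 + a1 zeta8 + a2 zeta8^2 + a3 zeta8^3 with integer coordinates (integral basis);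
  sigma (the automorphism fixing Q(j), zeta8 to -zeta8) acts by a1, a3 sign change.\<close>

definition zeta8 :: complex where
  "zeta8 = exp (2 * pi * \<i> / 8)"

definition z8elt :: "int \<Rightarrow> int \<Rightarrow> int \<Rightarrow> int \<Rightarrow> complex" where
  "z8elt a0 a1 a2 a3 = of_int a0 + of_int a1 * zeta8 + of_int a2 * zeta8^2 + of_int a3 * zeta8^3"

definition sigma8 :: "int \<Rightarrow> int \<Rightarrow> int \<Rightarrow> int \<Rightarrow> complex" where
  "sigma8 a0 a1 a2 a3 = z8elt a0 (- a1) a2 (- a3)"

definition gaussint :: "int \<Rightarrow> int \<Rightarrow> complex" where
  "gaussint b0 b1 = of_int b0 + of_int b1 * \<i>"

definition codeX :: "complex \<Rightarrow> complex \<Rightarrow> complex \<Rightarrow> complex mat" where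
  "codeX a sa b = mat_of_rows_list 2 [[a, b], [sa, - cnj b], [b, cnj sa]]"

definition codeXS :: "complex \<Rightarrow> complex \<Rightarrow> complex mat" where
  "codeXS a b = mat_of_rows_list 2 [[a, b]]"

definition codeXT :: "complex \<Rightarrow> complex \<Rightarrow> complex mat" where
  "codeXT sa b = mat_of_rows_list 2 [[sa, - cnj b], [b, cnj sa]]"

end

theory Submission imports Defs begin

text \<open>With \<open>A = |a|\<^sup>2\<close>, \<open>S = |\<sigma>(a)|\<^sup>2\<close>, \<open>B = |b|\<^sup>2\<close> a direct computation gives
  \<open>det(X\<^sup>\<dagger>X) = AB + AS + 3SB + S\<^sup>2 + 2B\<^sup>2\<close> and
  \<open>det(X\<^sub>SX\<^sub>S\<^sup>\<dagger>) det(X\<^sub>TX\<^sub>T\<^sup>\<dagger>) = (A + B)(S + B)\<^sup>2\<close>, real polynomials with non-negative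
  coefficients. If \<open>b \<noteq> 0\<close> then \<open>B \<ge> 1\<close>, since \<open>b\<close> is a non-zero Gaussian integer. If \<open>b = 0\<close>
  then \<open>a \<noteq> 0\<close>, and \<open>AS = |a \<sigma>(a)|\<^sup>2 \<ge> 1\<close> because the relative norm \<open>a \<sigma>(a)\<close> is a Gaussian
  integer, non-zero as \<open>\<sigma>\<close> is injective. Either way both determinants are bounded away from 0.\<close>

lemma int_square_eq_double_square_imp_zero:
  fixes x y :: int
  assumes "y^2 = 2 * x^2"
  shows "x = 0"
  using assms
proof (induction "nat \<bar>x\<bar>" arbitrary: x y rule: less_induct)
  case less
  show ?case
  proof (rule ccontr)
    assume "x \<noteq> 0"
    from less.prems obtain y' where y: "y = 2 * y'"
      by (metis dvd_triv_left even_power evenE)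
    with less.prems have x_sq: "x^2 = 2 * y'^2" by (simp add: power2_eq_square)
    then obtain x' where x: "x = 2 * x'"
      by (metis dvd_triv_left even_power evenE)
    with x_sq have "y'^2 = 2 * x'^2" by (simp add: power2_eq_square)
    moreover have "nat \<bar>x'\<bar> < nat \<bar>x\<bar>" using x \<open>x \<noteq> 0\<close> by auto
    ultimately have "x' = 0" using less.hyps by blast
    with x \<open>x \<noteq> 0\<close> show False by simp
  qed
qed

lemma int_add_sqrt2_mult_eq_0_iff:
  "of_int c + sqrt 2 * of_int u = 0 \<longleftrightarrow> c = 0 \<and> u = 0"
proof
  assume eq: "of_int c + sqrt 2 * of_int u = 0"
  then have "of_int (c^2) = (sqrt 2 * of_int u)^2"
    by (metis add_eq_0_iff of_int_power power2_minus)
  also have "\<dots> = of_int (2 * u^2)" by (simp add: power_mult_distrib)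
  finally have "c^2 = 2 * u^2" by (simp only: of_int_eq_iff)
  then have "u = 0" by (rule int_square_eq_double_square_imp_zero)
  with eq show "c = 0 \<and> u = 0" by simp
qed simp

lemma zeta8_eq_Complex: "zeta8 = Complex (sqrt 2 / 2) (sqrt 2 / 2)"
proof -
  have "zeta8 = cis (pi / 4)" unfolding zeta8_def cis_conv_exp by (simp add: field_simps)
  then show ?thesis by (simp add: cis.ctr cos_45 sin_45)
qed

lemma zeta8_square: "zeta8^2 = \<i>"
  by (simp add: zeta8_eq_Complex power2_eq_square complex_eq_iff)

lemma zeta8_cube: "zeta8^3 = \<i> * zeta8"
  by (simp add: power3_eq_cube zeta8_square[unfolded power2_eq_square])

lemma z8elt_eq_Complex:
  "z8elt x0 x1 x2 x3 = Complex (x0 + sqrt 2 / 2 * (x1 - x3)) (x2 + sqrt 2 / 2 * (x1 + x3))"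
  unfolding z8elt_def zeta8_square zeta8_cube unfolding zeta8_eq_Complex
  by (simp add: complex_eq_iff field_simps)

text \<open>The integral basis \<open>1, \<zeta>\<^sub>8, \<zeta>\<^sub>8\<^sup>2, \<zeta>\<^sub>8\<^sup>3\<close> is linearly independent because
  \<open>\<surd>2\<close> is irrational.\<close>

lemma z8elt_eq_0_iff: "z8elt x0 x1 x2 x3 = 0 \<longleftrightarrow> x0 = 0 \<and> x1 = 0 \<and> x2 = 0 \<and> x3 = 0"
proof -
  have "z8elt x0 x1 x2 x3 = 0 \<longleftrightarrow>
      of_int (2 * x0) + sqrt 2 * of_int (x1 - x3) = 0 \<and> of_int (2 * x2) + sqrt 2 * of_int (x1 + x3) = 0"
    by (simp add: z8elt_eq_Complex complex_eq_iff field_simps)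
  then show ?thesis unfolding int_add_sqrt2_mult_eq_0_iff by auto
qed

lemma sigma8_eq_0_iff: "sigma8 x0 x1 x2 x3 = 0 \<longleftrightarrow> z8elt x0 x1 x2 x3 = 0"
  by (simp add: sigma8_def z8elt_eq_0_iff)

text \<open>The relative norm of \<open>\<int>[\<zeta>\<^sub>8]/\<int>[j]\<close>: writing \<open>a = p + \<zeta>\<^sub>8 q\<close> with \<open>p, q \<in> \<int>[j]\<close>, one has
  \<open>\<sigma>(a) = p - \<zeta>\<^sub>8 q\<close> and hence \<open>a \<sigma>(a) = p\<^sup>2 - j q\<^sup>2\<close>.\<close>

lemma z8elt_mult_sigma8:
  "z8elt x0 x1 x2 x3 * sigma8 x0 x1 x2 x3
     = gaussint (x0^2 - x2^2 + 2 * x1 * x3) (2 * x0 * x2 - x1^2 + x3^2)"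
proof -
  define p where "p = of_int x0 + of_int x2 * \<i>"
  define q where "q = of_int x1 + of_int x3 * \<i>"
  have a: "z8elt x0 x1 x2 x3 = p + zeta8 * q" and sa: "sigma8 x0 x1 x2 x3 = p - zeta8 * q"
    by (simp_all add: sigma8_def z8elt_def zeta8_square zeta8_cube p_def q_def algebra_simps)
  have "z8elt x0 x1 x2 x3 * sigma8 x0 x1 x2 x3 = p^2 - zeta8^2 * q^2"
    unfolding a sa by (simp add: algebra_simps power2_eq_square)
  also have "\<dots> = p^2 - \<i> * q^2" by (simp only: zeta8_square)
  finally show ?thesis
    by (simp add: p_def q_def gaussint_def complex_eq_iff power2_eq_square algebra_simps)
qed

lemma gaussint_norm_square_ge_1:
  assumes "gaussint x y \<noteq> 0"
  shows "1 \<le> (cmod (gaussint x y))^2"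
proof -
  have "x \<noteq> 0 \<or> y \<noteq> 0" using assms by (auto simp: gaussint_def)
  then have "1 \<le> x^2 + y^2" by (smt (verit) zero_le_power2 power2_less_eq_zero_iff)
  then have "1 \<le> real_of_int (x^2 + y^2)" by linarith
  then show ?thesis by (simp add: cmod_power2 gaussint_def)
qed

lemma z8elt_sigma8_norm_square_ge_1:
  assumes "z8elt x0 x1 x2 x3 \<noteq> 0"
  shows "1 \<le> (cmod (z8elt x0 x1 x2 x3))^2 * (cmod (sigma8 x0 x1 x2 x3))^2"
proof -
  have "z8elt x0 x1 x2 x3 * sigma8 x0 x1 x2 x3 \<noteq> 0"
    using assms by (simp add: sigma8_eq_0_iff)
  then show ?thesis
    using gaussint_norm_square_ge_1
    by (metis norm_mult power_mult_distrib z8elt_mult_sigma8)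
qed

lemma det_2x2:
  fixes A :: "'a :: comm_ring_1 mat"
  assumes "A \<in> carrier_mat 2 2"
  shows "det A = A $$ (0, 0) * A $$ (1, 1) - A $$ (0, 1) * A $$ (1, 0)"
proof -
  have "det A = (\<Sum>j<2. A $$ (0, j) * cofactor A 0 j)"
    by (rule laplace_expansion_row[OF assms]) auto
  also have "\<dots> = A $$ (0, 0) * A $$ (1, 1) - A $$ (0, 1) * A $$ (1, 0)"
    using assms by (simp add: numeral_2_eq_2 cofactor_def det_single mat_delete_def)
  finally show ?thesis .
qed

lemma det_mat_of_rows_list_2x2:
  "det (mat_of_rows_list 2 [[p, q], [r, t :: 'a :: comm_ring_1]]) = p * t - q * r"
  by (subst det_2x2) (auto simp: mat_of_rows_list_def numeral_2_eq_2)

lemma det_mat_of_rows_list_1x1: "det (mat_of_rows_list 1 [[p :: 'a :: comm_ring_1]]) = p"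
  by (subst det_single) (auto simp: mat_of_rows_list_def)

lemma codeX_gram:
  "mat_adjoint (codeX a sa b) * codeX a sa b = mat_of_rows_list 2
     [[a * cnj a + sa * cnj sa + b * cnj b, cnj a * b], [cnj b * a, 2 * b * cnj b + sa * cnj sa]]"
  by (rule eq_matI) (auto simp: codeX_def mat_adjoint_def mat_of_rows_list_def scalar_prod_def
      numeral_2_eq_2 numeral_3_eq_3 less_Suc_eq cols_def mat_of_rows_def)

lemma codeXS_gram: "codeXS a b * mat_adjoint (codeXS a b) = mat_of_rows_list 1 [[a * cnj a + b * cnj b]]"
  by (rule eq_matI) (auto simp: codeXS_def mat_adjoint_def mat_of_rows_list_def scalar_prod_def
      numeral_2_eq_2 less_Suc_eq cols_def mat_of_rows_def)

lemma codeXT_gram: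
  "codeXT sa b * mat_adjoint (codeXT sa b)
     = mat_of_rows_list 2 [[sa * cnj sa + b * cnj b, 0], [0, b * cnj b + sa * cnj sa]]"
  by (rule eq_matI) (auto simp: codeXT_def mat_adjoint_def mat_of_rows_list_def scalar_prod_def
      numeral_2_eq_2 less_Suc_eq cols_def mat_of_rows_def)

lemma det_codeX_gram:
  "det (mat_adjoint (codeX a sa b) * codeX a sa b) = of_real
     ((cmod a)^2 * (cmod b)^2 + (cmod a)^2 * (cmod sa)^2 + 3 * (cmod sa)^2 * (cmod b)^2
      + ((cmod sa)^2)^2 + 2 * ((cmod b)^2)^2)"
proof -
  have "cnj a * b * (cnj b * a) = (a * cnj a) * (b * cnj b)" by (simp add: algebra_simps)
  then have "det (mat_adjoint (codeX a sa b) * codeX a sa b)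
      = (a * cnj a + sa * cnj sa + b * cnj b) * (2 * (b * cnj b) + sa * cnj sa) - (a * cnj a) * (b * cnj b)"
    unfolding codeX_gram det_mat_of_rows_list_2x2 by simp
  also have "\<dots> = of_real
     (((cmod a)^2 + (cmod sa)^2 + (cmod b)^2) * (2 * (cmod b)^2 + (cmod sa)^2) - (cmod a)^2 * (cmod b)^2)"
    unfolding complex_norm_square[symmetric] by simp
  finally show ?thesis by (simp add: algebra_simps power2_eq_square)
qed

lemma det_codeXS_gram_mult_det_codeXT_gram:
  "det (codeXS a b * mat_adjoint (codeXS a b)) * det (codeXT sa b * mat_adjoint (codeXT sa b))
     = of_real (((cmod a)^2 + (cmod b)^2) * ((cmod sa)^2 + (cmod b)^2)^2)"
proof -
  have "det (codeXS a b * mat_adjoint (codeXS a b)) * det (codeXT sa b * mat_adjoint (codeXT sa b))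
      = (a * cnj a + b * cnj b) * ((sa * cnj sa + b * cnj b) * (b * cnj b + sa * cnj sa))"
    unfolding codeXS_gram codeXT_gram det_mat_of_rows_list_1x1 det_mat_of_rows_list_2x2 by simp
  also have "\<dots> = of_real (((cmod a)^2 + (cmod b)^2) * (((cmod sa)^2 + (cmod b)^2) * ((cmod b)^2 + (cmod sa)^2)))"
    unfolding complex_norm_square[symmetric] by simp
  finally show ?thesis by (simp add: power2_eq_square[of "_ + _"] add.commute)
qed

lemma code_det_poly_bounds:
  fixes A S B :: real
  assumes "0 \<le> A" "0 \<le> S" "0 \<le> B" and "1 \<le> A * S \<or> 1 \<le> B"
  shows "1 \<le> A * B + A * S + 3 * S * B + S^2 + 2 * B^2"
    and "0 < (A + B) * (S + B)^2"
proof -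
  have nonneg: "0 \<le> A * B" "0 \<le> S * B" "0 \<le> S^2" "0 \<le> A * S" "0 \<le> B^2"
    using assms by auto
  from assms(4) show "1 \<le> A * B + A * S + 3 * S * B + S^2 + 2 * B^2"
  proof
    assume "1 \<le> B"
    then have "1 \<le> B^2" by (simp add: one_le_power)
    with nonneg show ?thesis by linarith
  qed (use nonneg in linarith)
  have "0 < A + B \<and> 0 < S + B"
  proof (cases "1 \<le> B")
    case False
    with assms(4) have "A \<noteq> 0" "S \<noteq> 0" by auto
    with assms(1-3) show ?thesis by linarith
  qed (use assms in linarith)
  then show "0 < (A + B) * (S + B)^2" by simp
qed

theorem mainTheorem2:
  fixes a0 a1 a2 a3 b0 b1 :: int
  defines "a \<equiv> z8elt a0 a1 a2 a3"
      and "sa \<equiv> sigma8 a0 a1 a2 a3"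
      and "b \<equiv> gaussint b0 b1"
  assumes "(a, b) \<noteq> (0, 0)"
  shows "Im (det (mat_adjoint (codeX a sa b) * codeX a sa b)) = 0
       \<and> Re (det (mat_adjoint (codeX a sa b) * codeX a sa b)) \<ge> 1
       \<and> det (codeXS a b * mat_adjoint (codeXS a b))
         * det (codeXT sa b * mat_adjoint (codeXT sa b)) \<noteq> 0"
proof -
  have "1 \<le> (cmod a)^2 * (cmod sa)^2 \<or> 1 \<le> (cmod b)^2"
    using assms(4) z8elt_sigma8_norm_square_ge_1 gaussint_norm_square_ge_1
    unfolding a_def sa_def b_def by blast
  from code_det_poly_bounds[OF zero_le_power2 zero_le_power2 zero_le_power2 this] show ?thesis
    unfolding det_codeX_gram det_codeXS_gram_mult_det_codeXT_gram Re_complex_of_real Im_complex_of_real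
      of_real_eq_0_iff by auto
qed

end
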